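(* For a round $t$, let $\mathrm{var}_{\sup}(t)$ be the supremum of $\mathrm{var}(X_a(t,\mathrm{ALG}))$ over all $n\ge1$, all assignments of densities $\Phi_a\in\mathcal F$ to the $n$ sensors, all synchronous independent meeting patterns of depth at least $t$, and all sensors $a$. Then $\lim_{t\to\infty}\mathrm{var}_{\sup}(t)=0$.
   Context: Model. Fix a finite set $\mathcal F$ of smooth probability densities on $\mathbb R$, each with mean zero and finite positive variance (smooth: positive everywhere, differentiable, with $\int\Phi'^2/\Phi<\infty$). One element $N\in\mathcal F$ is the noise density; $\mathrm{var}(N)$ is its variance. There are $n$ sensors; each sensor $a$ is assigned $\Phi_a\in\mathcal F$. An unknown $\tau^*\in\mathbb R$ is fixed, and the initial opinions $X_a(0)$ are independent, $X_a(0)$ having density $\Phi_a(x-\tau^* )$. Rounds are $t=0,1,2,\dots$. A meeting pattern specifies in advance, for each round $t$ and each sensor $a$, at most one other sensor $b$ that $a$ observes at round $t$. When $a$ observes $b$ at round $t$, $a$ obtains $\tilde d_{ab}(t)=x_b(t)-x_a(t)+\eta$ with $\eta$ of density $N$, independent of everything else. Relevant sets: $R_a(0)=\{a\}$; $R_a(t+1)=R_a(t)\cup R_b(t)$ if $a$ observes $b$ at round $t$, and $R_a(t+1)=R_a(t)$ otherwise. A pattern is independent if whenever $a$ observes $b$ at round $t$, $R_a(t)\cap R_b(t)=\emptyset$. A pattern is synchronous of depth at least $t$ if at every round $s<t$ every sensor observes some other sensor. Algorithm ALG. Each sensor $a$ keeps an opinion $x_a$ and an accuracy $c_a$, with $x_a(0)=X_a(0)$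 and $c_a(0)=1/\mathrm{var}(\Phi_a)$. If $a$ observes $b$ at round $t$, let $\hat c_b(t)=c_b(t)/(1+c_b(t)\,\mathrm{var}(N))$ and set $x_a(t+1)=x_a(t)+\tilde d_{ab}(t)\,\hat c_b(t)/(c_a(t)+\hat c_b(t))$ and $c_a(t+1)=c_a(t)+\hat c_b(t)$; otherwise $x_a(t+1)=x_a(t)$, $c_a(t+1)=c_a(t)$. $X_a(t,\mathrm{ALG})$ is the random variable $x_a(t)$. *)

theory Defs
  imports "HOL-Probability.Probability"
begin

definition var_dens :: "(real \<Rightarrow> real) \<Rightarrow> real" where
  "var_dens \<Phi> = (\<integral>x. x\<^sup>2 * \<Phi> x \<partial>lborel)"

definition smooth_density :: "(real \<Rightarrow> real) \<Rightarrow> bool" where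
  "smooth_density \<Phi> \<longleftrightarrow>
     (\<forall>x. \<Phi> x > 0) \<and>
     (\<forall>x. \<Phi> differentiable (at x)) \<and>
     (\<integral>\<^sup>+x. ennreal ((deriv \<Phi> x)\<^sup>2 / \<Phi> x) \<partial>lborel) < \<infinity> \<and>
     \<Phi> \<in> borel_measurable lborel \<and>
     (\<integral>\<^sup>+x. ennreal (\<Phi> x) \<partial>lborel) = 1 \<and>
     integrable lborel (\<lambda>x. x * \<Phi> x) \<and> (\<integral>x. x * \<Phi> x \<partial>lborel) = 0 \<and>
     integrable lborel (\<lambda>x. x\<^sup>2 * \<Phi> x) \<and> var_dens \<Phi> > 0"

text \<open>A meeting pattern: \<open>M t a = Some b\<close> iff sensor \<open>a\<close> observes \<open>b\<close> at round \<open>t\<close>.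
  Sensors are \<open>0..<n\<close>.\<close>
type_synonym pattern = "nat \<Rightarrow> nat \<Rightarrow> nat option"

definition valid_pattern :: "nat \<Rightarrow> pattern \<Rightarrow> bool" where
  "valid_pattern n M \<longleftrightarrow> (\<forall>t a b. a < n \<longrightarrow> M t a = Some b \<longrightarrow> b < n \<and> b \<noteq> a)"

fun relevant :: "pattern \<Rightarrow> nat \<Rightarrow> nat \<Rightarrow> nat set" where
  "relevant M 0 a = {a}"
| "relevant M (Suc t) a =
     (case M t a of None \<Rightarrow> relevant M t a | Some b \<Rightarrow> relevant M t a \<union> relevant M t b)"

definition independent_pattern :: "nat \<Rightarrow> pattern \<Rightarrow> bool" where
  "independent_pattern n M \<longleftrightarrow>
     (\<forall>t a b. a < n \<longrightarrow> M t a = Some b \<longrightarrow> relevant M t a \<inter> relevant M t b = {})"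

definition synchronous_depth :: "nat \<Rightarrow> pattern \<Rightarrow> nat \<Rightarrow> bool" where
  "synchronous_depth n M t \<longleftrightarrow> (\<forall>s<t. \<forall>a<n. M s a \<noteq> None)"

definition chat :: "real \<Rightarrow> real \<Rightarrow> real" where
  "chat vN c = c / (1 + c * vN)"

fun acc :: "real \<Rightarrow> (nat \<Rightarrow> real \<Rightarrow> real) \<Rightarrow> pattern \<Rightarrow> nat \<Rightarrow> nat \<Rightarrow> real" where
  "acc vN Phis M 0 a = 1 / var_dens (Phis a)"
| "acc vN Phis M (Suc t) a =
     (case M t a of None \<Rightarrow> acc vN Phis M t a
      | Some b \<Rightarrow> acc vN Phis M t a + chat vN (acc vN Phis M t b))"

text \<open>Opinions of ALG, given initial opinions \<open>x0\<close> and the noises \<open>eta (t,a)\<close>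
  affecting the observation made by \<open>a\<close> at round \<open>t\<close>.\<close>
fun opn :: "real \<Rightarrow> (nat \<Rightarrow> real \<Rightarrow> real) \<Rightarrow> pattern \<Rightarrow> (nat \<Rightarrow> real) \<Rightarrow> (nat \<times> nat \<Rightarrow> real)
             \<Rightarrow> nat \<Rightarrow> nat \<Rightarrow> real" where
  "opn vN Phis M x0 eta 0 a = x0 a"
| "opn vN Phis M x0 eta (Suc t) a =
     (case M t a of None \<Rightarrow> opn vN Phis M x0 eta t a
      | Some b \<Rightarrow> opn vN Phis M x0 eta t a
          + (opn vN Phis M x0 eta t b - opn vN Phis M x0 eta t a + eta (t, a))
            * chat vN (acc vN Phis M t b) / (acc vN Phis M t a + chat vN (acc vN Phis M t b)))"

definition sample_space ::
  "(real \<Rightarrow> real) \<Rightarrow> real \<Rightarrow> nat \<Rightarrow> (nat \<Rightarrow> real \<Rightarrow> real) \<Rightarrow> nat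
    \<Rightarrow> ((nat \<Rightarrow> real) \<times> (nat \<times> nat \<Rightarrow> real)) measure" where
  "sample_space N \<tau> n Phis t =
     (\<Pi>\<^sub>M a\<in>{..<n}. density lborel (\<lambda>x. ennreal (Phis a (x - \<tau>))))
     \<Otimes>\<^sub>M (\<Pi>\<^sub>M i\<in>{..<t} \<times> {..<n}. density lborel (\<lambda>x. ennreal (N x)))"

text \<open>Variance (as an extended nonnegative real, so that no junk value can arise).\<close>
definition variance_of :: "'a measure \<Rightarrow> ('a \<Rightarrow> real) \<Rightarrow> ennreal" where
  "variance_of P X = (\<integral>\<^sup>+\<omega>. ennreal ((X \<omega> - (\<integral>\<omega>'. X \<omega>' \<partial>P))\<^sup>2) \<partial>P)"

definition var_ALG ::
  "(real \<Rightarrow> real) \<Rightarrow> real \<Rightarrow> nat \<Rightarrow> (nat \<Rightarrow> real \<Rightarrow> real) \<Rightarrow> pattern \<Rightarrow> nat \<Rightarrow> nat \<Rightarrow> ennreal" where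
  "var_ALG N \<tau> n Phis M t a =
     variance_of (sample_space N \<tau> n Phis t)
       (\<lambda>(x0, eta). opn (var_dens N) Phis M x0 eta t a)"

definition var_sup :: "(real \<Rightarrow> real) set \<Rightarrow> (real \<Rightarrow> real) \<Rightarrow> real \<Rightarrow> nat \<Rightarrow> ennreal" where
  "var_sup F N \<tau> t =
     (SUP (n, Phis, M, a) \<in> {(n, Phis, M, a). n \<ge> 1 \<and> (\<forall>b<n. Phis b \<in> F) \<and>
              valid_pattern n M \<and> independent_pattern n M \<and> synchronous_depth n M t \<and> a < n}.
        var_ALG N \<tau> n Phis M t a)"

end

theory Submission
  imports Defs
begin

text \<open>The opinion of a sensor after \<open>t\<close> rounds is an affine combination of the independent
  initial opinions and observation noises, whose coefficients follow the same recursion as ALG.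
  Because in an independent pattern the two combined opinions depend on disjoint sets of
  variables, the variance of the fused opinion is exactly \<open>1 / c_a(t)\<close>: inverse variances add
  up, the observed one being degraded to \<open>\<hat>c_b = 1 / (1/c_b + var N)\<close> by the noise.
  In a synchronous pattern every accuracy grows by at least \<open>\<hat>c\<close> of the smallest initial
  accuracy per round, hence the variances are uniformly \<open>O(1/t)\<close>.\<close>

subsection \<open>Algebra of the accuracy update\<close>

lemma chat_pos: "0 < c \<Longrightarrow> 0 \<le> v \<Longrightarrow> 0 < chat v c"
  unfolding chat_def by (simp add: add_pos_nonneg)

lemma chat_mono:
  assumes "0 < x" "x \<le> y" "0 \<le> v"
  shows "chat v x \<le> chat v y"
proof -
  have "0 < 1 + x * v" "0 < 1 + y * v" using assms by (simp_all add: add_pos_nonneg)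
  moreover have "x * (1 + y * v) \<le> y * (1 + x * v)" using assms by (simp add: algebra_simps)
  ultimately show ?thesis unfolding chat_def by (simp add: divide_simps)
qed

lemma inverse_accuracy_update:
  fixes ca cb v :: real
  assumes "0 < ca" "0 < cb" "0 \<le> v"
  defines "w \<equiv> chat v cb / (ca + chat v cb)"
  shows "(1 - w)\<^sup>2 * (1 / ca) + w\<^sup>2 * (1 / cb) + w\<^sup>2 * v = 1 / (ca + chat v cb)"
proof -
  have "0 < 1 + cb * v" using assms by (simp add: add_pos_nonneg)
  then have ch: "0 < chat v cb" and inv: "1 / cb + v = 1 / chat v cb"
    using assms by (auto simp: chat_def field_simps)
  have "(1 - w)\<^sup>2 * (1 / ca) + w\<^sup>2 * (1 / cb) + w\<^sup>2 * v = (1 - w)\<^sup>2 / ca + w\<^sup>2 * (1 / cb + v)"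
    by (simp add: algebra_simps)
  also have "\<dots> = (1 - w)\<^sup>2 / ca + w\<^sup>2 / chat v cb"
    unfolding inv by simp
  also have "\<dots> = 1 / (ca + chat v cb)"
    using \<open>0 < ca\<close> ch by (simp add: w_def divide_simps power2_eq_square)
  finally show ?thesis .
qed

lemma sum_linear_update:
  fixes f g h x :: "'j \<Rightarrow> real"
  shows "(\<Sum>j\<in>S. (f j + (g j - f j + h j) * c) * x j) =
    (\<Sum>j\<in>S. f j * x j) + ((\<Sum>j\<in>S. g j * x j) - (\<Sum>j\<in>S. f j * x j) + (\<Sum>j\<in>S. h j * x j)) * c"
  by (simp add: algebra_simps sum.distrib sum_subtractf sum_distrib_left)

lemma sum_square_disjoint_update:
  fixes f g d v :: "'j \<Rightarrow> real"
  assumes "\<And>j. f j * g j = 0" "\<And>j. f j * d j = 0" "\<And>j. g j * d j = 0"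
  shows "(\<Sum>j\<in>S. (f j + (g j - f j + d j) * w)\<^sup>2 * v j) =
    (1 - w)\<^sup>2 * (\<Sum>j\<in>S. (f j)\<^sup>2 * v j) + w\<^sup>2 * (\<Sum>j\<in>S. (g j)\<^sup>2 * v j) + w\<^sup>2 * (\<Sum>j\<in>S. (d j)\<^sup>2 * v j)"
proof -
  have "(f j + (g j - f j + d j) * w)\<^sup>2 = (1 - w)\<^sup>2 * (f j)\<^sup>2 + w\<^sup>2 * (g j)\<^sup>2 + w\<^sup>2 * (d j)\<^sup>2" for j
    using assms[of j] by (cases "f j = 0"; cases "g j = 0") (auto simp: power2_eq_square algebra_simps)
  then show ?thesis
    by (simp add: ring_distribs sum.distrib sum_distrib_left mult.assoc)
qed

subsection \<open>ALG as a linear combination of the primitive random variables\<close>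

definition obs_weight :: "real \<Rightarrow> (nat \<Rightarrow> real \<Rightarrow> real) \<Rightarrow> pattern \<Rightarrow> nat \<Rightarrow> nat \<Rightarrow> nat \<Rightarrow> real" where
  "obs_weight vN Phis M t a b =
     chat vN (acc vN Phis M t b) / (acc vN Phis M t a + chat vN (acc vN Phis M t b))"

fun init_coeff :: "real \<Rightarrow> (nat \<Rightarrow> real \<Rightarrow> real) \<Rightarrow> pattern \<Rightarrow> nat \<Rightarrow> nat \<Rightarrow> nat \<Rightarrow> real" where
  "init_coeff vN Phis M 0 a i = (if i = a then 1 else 0)"
| "init_coeff vN Phis M (Suc t) a i =
     (case M t a of None \<Rightarrow> init_coeff vN Phis M t a i
      | Some b \<Rightarrow> init_coeff vN Phis M t a i
          + (init_coeff vN Phis M t b i - init_coeff vN Phis M t a i) * obs_weight vN Phis M t a b)"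

fun noise_coeff :: "real \<Rightarrow> (nat \<Rightarrow> real \<Rightarrow> real) \<Rightarrow> pattern \<Rightarrow> nat \<Rightarrow> nat \<Rightarrow> nat \<times> nat \<Rightarrow> real" where
  "noise_coeff vN Phis M 0 a j = 0"
| "noise_coeff vN Phis M (Suc t) a j =
     (case M t a of None \<Rightarrow> noise_coeff vN Phis M t a j
      | Some b \<Rightarrow> noise_coeff vN Phis M t a j
          + (noise_coeff vN Phis M t b j - noise_coeff vN Phis M t a j + (if j = (t, a) then 1 else 0))
            * obs_weight vN Phis M t a b)"

lemma opn_eq_linear_combination:
  assumes "valid_pattern n M" "a < n" "finite S" "{..<t} \<times> {..<n} \<subseteq> S"
  shows "opn vN Phis M x0 eta t a =
    (\<Sum>i<n. init_coeff vN Phis M t a i * x0 i) + (\<Sum>j\<in>S. noise_coeff vN Phis M t a j * eta j)"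
  using assms(2,4)
proof (induction t arbitrary: a)
  case 0
  then show ?case by (simp add: if_distrib[of "\<lambda>y. y * _"] cong: if_cong)
next
  case (Suc t)
  have S: "{..<t} \<times> {..<n} \<subseteq> S" using Suc.prems by auto
  show ?case
  proof (cases "M t a")
    case None
    then show ?thesis using Suc.IH[OF Suc.prems(1) S] by simp
  next
    case (Some b)
    have "b < n" using assms(1) Some Suc.prems(1) unfolding valid_pattern_def by blast
    have "(t, a) \<in> S" using Suc.prems by auto
    then have noise: "(\<Sum>j\<in>S. (if j = (t, a) then 1 else 0) * eta j) = eta (t, a)"
      using assms(3) by (simp add: if_distrib[of "\<lambda>y. y * _"] cong: if_cong)
    let ?w = "obs_weight vN Phis M t a b"
    have "opn vN Phis M x0 eta (Suc t) a = opn vN Phis M x0 eta t a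
          + (opn vN Phis M x0 eta t b - opn vN Phis M x0 eta t a + eta (t, a)) * ?w"
      using Some by (simp add: obs_weight_def)
    also have "\<dots> = (\<Sum>i<n. init_coeff vN Phis M (Suc t) a i * x0 i)
                    + (\<Sum>j\<in>S. noise_coeff vN Phis M (Suc t) a j * eta j)"
      using Some Suc.IH[OF Suc.prems(1) S] Suc.IH[OF \<open>b < n\<close> S] noise
        sum_linear_update[of "init_coeff vN Phis M t a" "init_coeff vN Phis M t b" "\<lambda>_. 0" ?w x0 "{..<n}"]
        sum_linear_update[of "noise_coeff vN Phis M t a" "noise_coeff vN Phis M t b"
          "\<lambda>j. if j = (t, a) then 1 else 0" ?w eta S]
      by (simp add: algebra_simps)
    finally show ?thesis .
  qed
qed

lemma self_in_relevant: "a \<in> relevant M t a"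
  by (induction t arbitrary: a) (auto split: option.split)

lemma init_coeff_nonzero_imp_relevant: "init_coeff vN Phis M t a i \<noteq> 0 \<Longrightarrow> i \<in> relevant M t a"
proof (induction t arbitrary: a)
  case (Suc t)
  show ?case
  proof (cases "M t a")
    case (Some b)
    with Suc.prems have "init_coeff vN Phis M t a i \<noteq> 0 \<or> init_coeff vN Phis M t b i \<noteq> 0"
      by auto
    then show ?thesis using Suc.IH Some by auto
  qed (use Suc in simp)
qed (simp split: if_splits)

lemma noise_coeff_nonzero_imp_relevant:
  "noise_coeff vN Phis M t a (s, c) \<noteq> 0 \<Longrightarrow> s < t \<and> c \<in> relevant M t a"
proof (induction t arbitrary: a)
  case (Suc t)
  show ?case
  proof (cases "M t a")
    case (Some b)
    with Suc.prems have "noise_coeff vN Phis M t a (s, c) \<noteq> 0 \<or> noise_coeff vN Phis M t b (s, c) \<noteq> 0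
        \<or> (s, c) = (t, a)"
      by (auto split: if_splits)
    then show ?thesis using Suc.IH[of a] Suc.IH[of b] Some self_in_relevant[of a M t] by auto
  qed (use Suc in force)
qed simp

lemma acc_pos:
  assumes "valid_pattern n M" "\<forall>b<n. 0 < var_dens (Phis b)" "0 \<le> vN" "a < n"
  shows "0 < acc vN Phis M t a"
  using assms(4)
proof (induction t arbitrary: a)
  case 0
  then show ?case using assms(2) by simp
next
  case (Suc t)
  show ?case
  proof (cases "M t a")
    case None
    then show ?thesis using Suc by simp
  next
    case (Some b)
    then have "b < n" using assms(1) Suc.prems unfolding valid_pattern_def by blast
    then show ?thesis using Some Suc.IH[OF Suc.prems] chat_pos[OF Suc.IH[OF \<open>b < n\<close>] assms(3)] by simp
  qed
qed

text \<open>In an independent pattern the two fused opinions have disjointly supported coefficients,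
  so their weighted sum of squares splits; this is the variance of \<open>X_a(t,ALG)\<close>.\<close>

lemma coeff_sq_sum_eq_inverse_acc:
  assumes valid: "valid_pattern n M" and indep: "independent_pattern n M"
    and var_pos: "\<forall>b<n. 0 < var_dens (Phis b)" and "0 \<le> vN"
    and "a < n" "finite S" "{..<t} \<times> {..<n} \<subseteq> S"
  shows "(\<Sum>i<n. (init_coeff vN Phis M t a i)\<^sup>2 * var_dens (Phis i))
           + (\<Sum>j\<in>S. (noise_coeff vN Phis M t a j)\<^sup>2 * vN) = 1 / acc vN Phis M t a"
  using assms(5,7)
proof (induction t arbitrary: a)
  case 0
  then show ?case by (simp add: if_distrib[of "\<lambda>y. y\<^sup>2 * _"] cong: if_cong)
next
  case (Suc t)
  have S: "{..<t} \<times> {..<n} \<subseteq> S" using Suc.prems by auto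
  show ?case
  proof (cases "M t a")
    case None
    then show ?thesis using Suc.IH[OF Suc.prems(1) S] by simp
  next
    case (Some b)
    have "b < n" using valid Some Suc.prems(1) unfolding valid_pattern_def by blast
    have disj: "relevant M t a \<inter> relevant M t b = {}"
      using indep Some Suc.prems(1) unfolding independent_pattern_def by blast
    let ?w = "obs_weight vN Phis M t a b"
    let ?A = "init_coeff vN Phis M t a" and ?B = "init_coeff vN Phis M t b"
    let ?C = "noise_coeff vN Phis M t a" and ?E = "noise_coeff vN Phis M t b"
    let ?d = "\<lambda>j::nat \<times> nat. if j = (t, a) then 1 else (0::real)"
    have AB: "?A i * ?B i = 0" for i
      using init_coeff_nonzero_imp_relevant[of vN Phis M t _ i] disj by auto
    have CE: "?C j * ?E j = 0" for j
      using noise_coeff_nonzero_imp_relevant[of vN Phis M t _ "fst j" "snd j"] disj by auto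
    have Cd: "?C j * ?d j = 0" and Ed: "?E j * ?d j = 0" for j
      using noise_coeff_nonzero_imp_relevant[of vN Phis M t _ t a] by auto
    have init: "(\<Sum>i<n. (init_coeff vN Phis M (Suc t) a i)\<^sup>2 * var_dens (Phis i)) =
       (1 - ?w)\<^sup>2 * (\<Sum>i<n. (?A i)\<^sup>2 * var_dens (Phis i)) + ?w\<^sup>2 * (\<Sum>i<n. (?B i)\<^sup>2 * var_dens (Phis i))"
      using sum_square_disjoint_update[of ?A ?B "\<lambda>_. 0"] AB Some by simp
    have "(t, a) \<in> S" using Suc.prems by auto
    then have "(\<Sum>j\<in>S. (?d j)\<^sup>2 * vN) = vN"
      using \<open>finite S\<close> by (simp add: if_distrib[of "\<lambda>y. y\<^sup>2 * _"] cong: if_cong)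
    then have noise: "(\<Sum>j\<in>S. (noise_coeff vN Phis M (Suc t) a j)\<^sup>2 * vN) =
       (1 - ?w)\<^sup>2 * (\<Sum>j\<in>S. (?C j)\<^sup>2 * vN) + ?w\<^sup>2 * (\<Sum>j\<in>S. (?E j)\<^sup>2 * vN) + ?w\<^sup>2 * vN"
      using sum_square_disjoint_update[of ?C ?E ?d, OF CE Cd Ed] Some by simp
    have "0 < acc vN Phis M t a" "0 < acc vN Phis M t b"
      using acc_pos[OF valid var_pos \<open>0 \<le> vN\<close>] Suc.prems(1) \<open>b < n\<close> by auto
    then have "(1 - ?w)\<^sup>2 * (1 / acc vN Phis M t a) + ?w\<^sup>2 * (1 / acc vN Phis M t b) + ?w\<^sup>2 * vN
        = 1 / acc vN Phis M (Suc t) a"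
      using inverse_accuracy_update \<open>0 \<le> vN\<close> Some by (simp add: obs_weight_def)
    then show ?thesis
      unfolding init noise
      using Suc.IH[OF Suc.prems(1) S] Suc.IH[OF \<open>b < n\<close> S] by (simp add: algebra_simps flip: distrib_left)
  qed
qed

lemma acc_ge_linear:
  assumes valid: "valid_pattern n M" and "synchronous_depth n M t" and "0 \<le> vN" and "0 < c0"
    and init: "\<forall>b<n. c0 \<le> acc vN Phis M 0 b" and "a < n"
  shows "c0 + real t * chat vN c0 \<le> acc vN Phis M t a"
  using assms(2,6)
proof (induction t arbitrary: a)
  case 0
  then show ?case using init by simp
next
  case (Suc t)
  have sync: "synchronous_depth n M t" using Suc.prems(1) unfolding synchronous_depth_def by auto
  obtain b where Some: "M t a = Some b" using Suc.prems unfolding synchronous_depth_def by auto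
  then have "b < n" using valid Suc.prems(2) unfolding valid_pattern_def by blast
  have "0 < chat vN c0" using chat_pos \<open>0 < c0\<close> \<open>0 \<le> vN\<close> .
  then have "c0 \<le> acc vN Phis M t b"
    using Suc.IH[OF sync \<open>b < n\<close>] by (smt (verit) of_nat_0_le_iff mult_nonneg_nonneg)
  then have "chat vN c0 \<le> chat vN (acc vN Phis M t b)" using chat_mono \<open>0 < c0\<close> \<open>0 \<le> vN\<close> by blast
  then show ?case using Suc.IH[OF sync Suc.prems(2)] Some by (simp add: algebra_simps)
qed

subsection \<open>Second moments of independent sums\<close>

lemma PiM_centered_combination_moments:
  fixes D :: "'i \<Rightarrow> real measure" and A :: "'i \<Rightarrow> real"
  assumes fin: "finite I" and prob: "\<And>i. i \<in> I \<Longrightarrow> prob_space (D i)"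
    and int1: "\<And>i. i \<in> I \<Longrightarrow> integrable (D i) (\<lambda>x. x - \<mu> i)"
    and mean: "\<And>i. i \<in> I \<Longrightarrow> (\<integral>x. x - \<mu> i \<partial>D i) = 0"
    and int2: "\<And>i. i \<in> I \<Longrightarrow> integrable (D i) (\<lambda>x. (x - \<mu> i)\<^sup>2)"
    and var: "\<And>i. i \<in> I \<Longrightarrow> (\<integral>x. (x - \<mu> i)\<^sup>2 \<partial>D i) = v i"
  shows "integrable (PiM I D) (\<lambda>\<omega>. \<Sum>i\<in>I. A i * (\<omega> i - \<mu> i))"
    and "(\<integral>\<omega>. (\<Sum>i\<in>I. A i * (\<omega> i - \<mu> i)) \<partial>PiM I D) = 0"
    and "integrable (PiM I D) (\<lambda>\<omega>. (\<Sum>i\<in>I. A i * (\<omega> i - \<mu> i))\<^sup>2)"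
    and "(\<integral>\<omega>. (\<Sum>i\<in>I. A i * (\<omega> i - \<mu> i))\<^sup>2 \<partial>PiM I D) = (\<Sum>i\<in>I. (A i)\<^sup>2 * v i)"
proof -
  text \<open>\<open>product_prob_space\<close> needs probability spaces outside \<open>I\<close> as well.\<close>
  define D' where "D' i = (if i \<in> I then D i else count_space {undefined})" for i
  interpret D': prob_space "D' i" for i
    using prob by (cases "i \<in> I") (auto intro!: prob_spaceI simp: D'_def)
  interpret product_prob_space D' I
    by unfold_locales
  have PiM_eq: "PiM I D = PiM I D'"
    by (rule PiM_cong) (auto simp: D'_def)
  have D': "integrable (D' i) (\<lambda>x. x - \<mu> i)" "(\<integral>x. x - \<mu> i \<partial>D' i) = 0"
    "integrable (D' i) (\<lambda>x. (x - \<mu> i)\<^sup>2)" "(\<integral>x. (x - \<mu> i)\<^sup>2 \<partial>D' i) = v i" if "i \<in> I" for i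
    using that int1 mean int2 var by (auto simp: D'_def)
  have coord: "integrable (PiM I D') (\<lambda>\<omega>. p (\<omega> i) * q (\<omega> k))
      \<and> (\<integral>\<omega>. p (\<omega> i) * q (\<omega> k) \<partial>PiM I D') = (if i = k then (\<integral>x. p x * q x \<partial>D' i)
                                                  else (\<integral>x. p x \<partial>D' i) * (\<integral>x. q x \<partial>D' k))"
    if "i \<in> I" "k \<in> I" "integrable (D' i) p" "integrable (D' k) q"
      "i = k \<Longrightarrow> integrable (D' i) (\<lambda>x. p x * q x)"
    for i k and p q :: "real \<Rightarrow> real"
  proof -
    define f where "f = (\<lambda>j x. (if j = i then p x else 1) * (if j = k then q x else 1))"
    have int: "integrable (D' j) (f j)" if "j \<in> I" for j
      using that \<open>integrable (D' i) p\<close> \<open>integrable (D' k) q\<close> \<open>i = k \<Longrightarrow> integrable (D' i) (\<lambda>x. p x * q x)\<close>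
      by (cases "j = i"; cases "j = k") (auto simp: f_def)
    have "(\<lambda>\<omega>. \<Prod>j\<in>I. f j (\<omega> j)) = (\<lambda>\<omega>. p (\<omega> i) * q (\<omega> k))"
      using fin \<open>i \<in> I\<close> \<open>k \<in> I\<close> by (simp add: f_def prod.distrib prod.delta)
    moreover have "(\<Prod>j\<in>I. integral\<^sup>L (D' j) (f j)) = (if i = k then (\<integral>x. p x * q x \<partial>D' i)
                                                  else (\<integral>x. p x \<partial>D' i) * (\<integral>x. q x \<partial>D' k))"
    proof (cases "i = k")
      case True
      then have "(\<Prod>j\<in>I. integral\<^sup>L (D' j) (f j)) = (\<Prod>j\<in>I. if j = i then (\<integral>x. p x * q x \<partial>D' i) else 1)"
        by (intro prod.cong refl) (auto simp: f_def D'.prob_space)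
      with fin \<open>i \<in> I\<close> True show ?thesis by simp
    next
      case False
      then have "(\<Prod>j\<in>I. integral\<^sup>L (D' j) (f j)) =
          (\<Prod>j\<in>I. (if j = i then (\<integral>x. p x \<partial>D' i) else 1) * (if j = k then (\<integral>x. q x \<partial>D' k) else 1))"
        by (intro prod.cong refl) (auto simp: f_def D'.prob_space)
      with fin \<open>i \<in> I\<close> \<open>k \<in> I\<close> False show ?thesis by (simp add: prod.distrib prod.delta)
    qed
    ultimately show ?thesis
      using product_integrable_prod[OF fin int] product_integral_prod[OF fin int] by simp
  qed
  have centered: "integrable (PiM I D') (\<lambda>\<omega>. \<omega> i - \<mu> i)" "(\<integral>\<omega>. \<omega> i - \<mu> i \<partial>PiM I D') = 0"
    if "i \<in> I" for i
    using coord[OF that that, of "\<lambda>x. x - \<mu> i" "\<lambda>_. 1"] D'[OF that] by auto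
  have cross: "integrable (PiM I D') (\<lambda>\<omega>. (\<omega> i - \<mu> i) * (\<omega> k - \<mu> k))"
    "(\<integral>\<omega>. (\<omega> i - \<mu> i) * (\<omega> k - \<mu> k) \<partial>PiM I D') = (if i = k then v i else 0)"
    if "i \<in> I" "k \<in> I" for i k
    using coord[OF that, of "\<lambda>x. x - \<mu> i" "\<lambda>x. x - \<mu> k"] D'[OF that(1)] D'[OF that(2)]
    by (auto simp: power2_eq_square)
  have square: "(\<Sum>i\<in>I. A i * (\<omega> i - \<mu> i))\<^sup>2
      = (\<Sum>i\<in>I. \<Sum>k\<in>I. A i * A k * ((\<omega> i - \<mu> i) * (\<omega> k - \<mu> k)))" for \<omega> :: "'i \<Rightarrow> real"
    by (auto simp: power2_eq_square sum_product intro!: sum.cong)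
  show "integrable (PiM I D) (\<lambda>\<omega>. \<Sum>i\<in>I. A i * (\<omega> i - \<mu> i))"
    "(\<integral>\<omega>. (\<Sum>i\<in>I. A i * (\<omega> i - \<mu> i)) \<partial>PiM I D) = 0"
    unfolding PiM_eq using centered by simp_all
  show "integrable (PiM I D) (\<lambda>\<omega>. (\<Sum>i\<in>I. A i * (\<omega> i - \<mu> i))\<^sup>2)"
    unfolding PiM_eq square using cross by simp
  have "(\<integral>\<omega>. (\<Sum>i\<in>I. A i * (\<omega> i - \<mu> i))\<^sup>2 \<partial>PiM I D')
      = (\<Sum>i\<in>I. \<Sum>k\<in>I. A i * A k * (if i = k then v i else 0))"
    unfolding square using cross by simp
  also have "\<dots> = (\<Sum>i\<in>I. (A i)\<^sup>2 * v i)"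
    using fin by (simp add: if_distrib[of "\<lambda>x. _ * x"] power2_eq_square cong: if_cong)
  finally show "(\<integral>\<omega>. (\<Sum>i\<in>I. A i * (\<omega> i - \<mu> i))\<^sup>2 \<partial>PiM I D) = (\<Sum>i\<in>I. (A i)\<^sup>2 * v i)"
    unfolding PiM_eq .
qed

lemma (in pair_prob_space) distr_pair_snd: "distr (M1 \<Otimes>\<^sub>M M2) M2 snd = M2"
proof (intro measure_eqI)
  fix A assume A: "A \<in> sets (distr (M1 \<Otimes>\<^sub>M M2) M2 snd)"
  then have "emeasure (distr (M1 \<Otimes>\<^sub>M M2) M2 snd) A = emeasure (M1 \<Otimes>\<^sub>M M2) (space M1 \<times> A)"
    by (auto simp: emeasure_distr space_pair_measure dest: sets.sets_into_space
        intro!: arg_cong2[where f=emeasure])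
  with A show "emeasure (distr (M1 \<Otimes>\<^sub>M M2) M2 snd) A = emeasure M2 A"
    using M2.emeasure_pair_measure_Times[of "space M1" M1 A] M1.emeasure_space_1 by simp
qed simp

lemma (in pair_prob_space)
  fixes g :: "'a \<Rightarrow> real" and h :: "'b \<Rightarrow> real"
  shows integrable_pair_fst: "integrable M1 g \<Longrightarrow> integrable (M1 \<Otimes>\<^sub>M M2) (\<lambda>\<omega>. g (fst \<omega>))"
    and integral_pair_fst: "integrable M1 g \<Longrightarrow> (\<integral>\<omega>. g (fst \<omega>) \<partial>(M1 \<Otimes>\<^sub>M M2)) = integral\<^sup>L M1 g"
    and integrable_pair_snd: "integrable M2 h \<Longrightarrow> integrable (M1 \<Otimes>\<^sub>M M2) (\<lambda>\<omega>. h (snd \<omega>))"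
    and integral_pair_snd: "integrable M2 h \<Longrightarrow> (\<integral>\<omega>. h (snd \<omega>) \<partial>(M1 \<Otimes>\<^sub>M M2)) = integral\<^sup>L M2 h"
  using integrable_distr_eq[of fst "M1 \<Otimes>\<^sub>M M2" M1 g] integral_distr[of fst "M1 \<Otimes>\<^sub>M M2" M1 g]
    integrable_distr_eq[of snd "M1 \<Otimes>\<^sub>M M2" M2 h] integral_distr[of snd "M1 \<Otimes>\<^sub>M M2" M2 h]
  by (auto simp: M2.distr_pair_fst distr_pair_snd)

lemma abs_mult_le_sum_squares: "\<bar>a * b\<bar> \<le> a\<^sup>2 + b\<^sup>2" for a b :: real
proof -
  have "2 * \<bar>a * b\<bar> \<le> a\<^sup>2 + b\<^sup>2"
    using sum_squares_bound[of "\<bar>a\<bar>" "\<bar>b\<bar>"] by (simp add: abs_mult)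
  then show ?thesis by (smt (verit) abs_ge_zero)
qed

lemma (in pair_prob_space) variance_of_pair_sum:
  fixes Y1 :: "'a \<Rightarrow> real" and Y2 :: "'b \<Rightarrow> real"
  assumes Y1: "integrable M1 Y1" "integral\<^sup>L M1 Y1 = 0" "integrable M1 (\<lambda>x. (Y1 x)\<^sup>2)"
    and Y2: "integrable M2 Y2" "integral\<^sup>L M2 Y2 = 0" "integrable M2 (\<lambda>y. (Y2 y)\<^sup>2)"
  shows "variance_of (M1 \<Otimes>\<^sub>M M2) (\<lambda>\<omega>. Y1 (fst \<omega>) + Y2 (snd \<omega>) + c)
    = ennreal ((\<integral>x. (Y1 x)\<^sup>2 \<partial>M1) + (\<integral>y. (Y2 y)\<^sup>2 \<partial>M2))"
proof -
  have [measurable]: "Y1 \<in> borel_measurable M1" "Y2 \<in> borel_measurable M2"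
    using Y1 Y2 by auto
  note marginals = integrable_pair_fst[OF Y1(1)] integrable_pair_fst[OF Y1(3)]
    integrable_pair_snd[OF Y2(1)] integrable_pair_snd[OF Y2(3)]
    integral_pair_fst[OF Y1(1)] integral_pair_snd[OF Y2(1)]
    integral_pair_fst[OF Y1(3)] integral_pair_snd[OF Y2(3)]
  have cross_int: "integrable (M1 \<Otimes>\<^sub>M M2) (\<lambda>\<omega>. Y1 (fst \<omega>) * Y2 (snd \<omega>))"
    by (rule Bochner_Integration.integrable_bound[where f="\<lambda>\<omega>. (Y1 (fst \<omega>))\<^sup>2 + (Y2 (snd \<omega>))\<^sup>2"])
      (use marginals in \<open>auto simp: abs_mult_le_sum_squares\<close>)
  have "(\<integral>\<omega>. Y1 (fst \<omega>) * Y2 (snd \<omega>) \<partial>(M1 \<Otimes>\<^sub>M M2)) = (\<integral>x. (\<integral>y. Y1 x * Y2 y \<partial>M2) \<partial>M1)"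
    using integral_fst'[OF cross_int] by simp
  then have cross: "(\<integral>\<omega>. Y1 (fst \<omega>) * Y2 (snd \<omega>) \<partial>(M1 \<Otimes>\<^sub>M M2)) = 0"
    using Y2 by simp
  have square: "(Y1 (fst \<omega>) + Y2 (snd \<omega>))\<^sup>2 = (Y1 (fst \<omega>))\<^sup>2 + 2 * (Y1 (fst \<omega>) * Y2 (snd \<omega>)) + (Y2 (snd \<omega>))\<^sup>2"
    for \<omega> by (simp add: power2_sum)
  have square_int: "integrable (M1 \<Otimes>\<^sub>M M2) (\<lambda>\<omega>. (Y1 (fst \<omega>) + Y2 (snd \<omega>))\<^sup>2)"
    using marginals cross_int by (simp add: square)
  have mean: "(\<integral>\<omega>. Y1 (fst \<omega>) + Y2 (snd \<omega>) + c \<partial>(M1 \<Otimes>\<^sub>M M2)) = c"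
    using marginals Y1 Y2 by (simp add: prob_space)
  have "variance_of (M1 \<Otimes>\<^sub>M M2) (\<lambda>\<omega>. Y1 (fst \<omega>) + Y2 (snd \<omega>) + c)
      = (\<integral>\<^sup>+\<omega>. ennreal ((Y1 (fst \<omega>) + Y2 (snd \<omega>))\<^sup>2) \<partial>(M1 \<Otimes>\<^sub>M M2))"
    unfolding variance_of_def mean by simp
  also have "\<dots> = ennreal (\<integral>\<omega>. (Y1 (fst \<omega>) + Y2 (snd \<omega>))\<^sup>2 \<partial>(M1 \<Otimes>\<^sub>M M2))"
    using square_int by (intro nn_integral_eq_integral) auto
  also have "\<dots> = ennreal ((\<integral>x. (Y1 x)\<^sup>2 \<partial>M1) + (\<integral>y. (Y2 y)\<^sup>2 \<partial>M2))"
    using marginals cross_int cross by (simp add: square)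
  finally show ?thesis .
qed

lemma shifted_density_moments:
  fixes \<tau> :: real
  assumes "smooth_density \<Phi>"
  defines "D \<equiv> density lborel (\<lambda>x. ennreal (\<Phi> (x - \<tau>)))"
  shows "prob_space D"
    and "integrable D (\<lambda>x. x - \<tau>)" "(\<integral>x. x - \<tau> \<partial>D) = 0"
    and "integrable D (\<lambda>x. (x - \<tau>)\<^sup>2)" "(\<integral>x. (x - \<tau>)\<^sup>2 \<partial>D) = var_dens \<Phi>"
proof -
  have pos: "\<And>x. 0 < \<Phi> x" and [measurable]: "\<Phi> \<in> borel_measurable borel"
    and total: "(\<integral>\<^sup>+x. ennreal (\<Phi> x) \<partial>lborel) = 1"
    and int1: "integrable lborel (\<lambda>x. x * \<Phi> x)" and mean: "(\<integral>x. x * \<Phi> x \<partial>lborel) = 0"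
    and int2: "integrable lborel (\<lambda>x. x\<^sup>2 * \<Phi> x)"
    using assms(1) unfolding smooth_density_def by auto
  have shifted[measurable]: "(\<lambda>x. \<Phi> (x - \<tau>)) \<in> borel_measurable lborel"
    by measurable
  have nonneg: "AE x in lborel. 0 \<le> \<Phi> (x - \<tau>)"
    using pos by (simp add: less_imp_le)
  have shift: "(\<lambda>x. \<Phi> (x - \<tau>) * f (x - \<tau>)) = (\<lambda>x. (\<lambda>y. f y * \<Phi> y) (-\<tau> + 1 * x))"
    for f :: "real \<Rightarrow> real" by (auto simp: fun_eq_iff)
  have "emeasure D (space D) = (\<integral>\<^sup>+x. ennreal (\<Phi> (x - \<tau>)) \<partial>lborel)"
    by (simp add: D_def emeasure_density)
  also have "\<dots> = 1"
    using nn_integral_real_affine[of "\<lambda>x. ennreal (\<Phi> x)" 1 "-\<tau>"] total by simp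
  finally show "prob_space D" by (intro prob_spaceI)
  show "integrable D (\<lambda>x. x - \<tau>)"
    using lborel_integrable_real_affine_iff[of 1 "\<lambda>y. y * \<Phi> y" "-\<tau>"] int1
    unfolding D_def by (subst integrable_density[OF _ shifted nonneg]) (auto simp: shift[of "\<lambda>y. y", symmetric] mult.commute)
  show "integrable D (\<lambda>x. (x - \<tau>)\<^sup>2)"
    using lborel_integrable_real_affine_iff[of 1 "\<lambda>y. y\<^sup>2 * \<Phi> y" "-\<tau>"] int2
    unfolding D_def by (subst integrable_density[OF _ shifted nonneg]) (auto simp: shift[of "\<lambda>y. y\<^sup>2", symmetric] mult.commute)
  show "(\<integral>x. x - \<tau> \<partial>D) = 0"
    using lborel_integral_real_affine[of 1 "\<lambda>y. y * \<Phi> y" "-\<tau>"] mean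
    unfolding D_def by (subst integral_density[OF _ shifted nonneg]) (auto simp: shift[of "\<lambda>y. y", symmetric] mult.commute)
  show "(\<integral>x. (x - \<tau>)\<^sup>2 \<partial>D) = var_dens \<Phi>"
    using lborel_integral_real_affine[of 1 "\<lambda>y. y\<^sup>2 * \<Phi> y" "-\<tau>"]
    unfolding D_def by (subst integral_density[OF _ shifted nonneg]) (auto simp: shift[of "\<lambda>y. y\<^sup>2", symmetric] var_dens_def mult.commute)
qed

lemma variance_of_sample_space_linear:
  assumes init: "\<forall>i<n. smooth_density (Phis i)" and noise: "smooth_density N"
  shows "variance_of (sample_space N \<tau> n Phis t)
      (\<lambda>(x0, eta). (\<Sum>i<n. A i * x0 i) + (\<Sum>j\<in>{..<t} \<times> {..<n}. B j * eta j))
    = ennreal ((\<Sum>i<n. (A i)\<^sup>2 * var_dens (Phis i)) + (\<Sum>j\<in>{..<t} \<times> {..<n}. (B j)\<^sup>2 * var_dens N))"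
proof -
  define J where "J = {..<t} \<times> {..<n}"
  define D where "D = (\<lambda>i. density lborel (\<lambda>x. ennreal (Phis i (x - \<tau>))))"
  define E where "E = (\<lambda>j::nat \<times> nat. density lborel (\<lambda>x. ennreal (N x)))"
  define Y1 where "Y1 = (\<lambda>x0. \<Sum>i<n. A i * (x0 i - \<tau>))"
  define Y2 where "Y2 = (\<lambda>eta. \<Sum>j\<in>J. B j * eta j)"
  have D: "prob_space (D i)" "integrable (D i) (\<lambda>x. x - \<tau>)" "(\<integral>x. x - \<tau> \<partial>D i) = 0"
    "integrable (D i) (\<lambda>x. (x - \<tau>)\<^sup>2)" "(\<integral>x. (x - \<tau>)\<^sup>2 \<partial>D i) = var_dens (Phis i)"
    if "i < n" for i
    unfolding D_def using shifted_density_moments[of "Phis i" \<tau>] init that by auto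
  have E: "prob_space (E j)" "integrable (E j) (\<lambda>x. x)" "(\<integral>x. x \<partial>E j) = 0"
    "integrable (E j) (\<lambda>x. x\<^sup>2)" "(\<integral>x. x\<^sup>2 \<partial>E j) = var_dens N" for j
    unfolding E_def using shifted_density_moments[OF noise, of 0] by auto
  have Y1: "integrable (PiM {..<n} D) Y1" "integral\<^sup>L (PiM {..<n} D) Y1 = 0"
    "integrable (PiM {..<n} D) (\<lambda>x. (Y1 x)\<^sup>2)"
    "(\<integral>x. (Y1 x)\<^sup>2 \<partial>PiM {..<n} D) = (\<Sum>i<n. (A i)\<^sup>2 * var_dens (Phis i))"
    unfolding Y1_def
    using PiM_centered_combination_moments[of "{..<n}" D "\<lambda>_. \<tau>" "\<lambda>i. var_dens (Phis i)" A] D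
    by auto
  have Y2: "integrable (PiM J E) Y2" "integral\<^sup>L (PiM J E) Y2 = 0"
    "integrable (PiM J E) (\<lambda>x. (Y2 x)\<^sup>2)"
    "(\<integral>x. (Y2 x)\<^sup>2 \<partial>PiM J E) = (\<Sum>j\<in>J. (B j)\<^sup>2 * var_dens N)"
    unfolding Y2_def
    using PiM_centered_combination_moments[of J E "\<lambda>_. 0" "\<lambda>_. var_dens N" B] E
    by (auto simp: J_def)
  interpret pair_prob_space "PiM {..<n} D" "PiM J E"
    unfolding pair_prob_space_def pair_sigma_finite_def
    using D(1) E(1) by (auto intro!: prob_space_PiM prob_space_imp_sigma_finite)
  have "(\<lambda>(x0, eta). (\<Sum>i<n. A i * x0 i) + (\<Sum>j\<in>J. B j * eta j))
      = (\<lambda>\<omega>. Y1 (fst \<omega>) + Y2 (snd \<omega>) + (\<Sum>i<n. A i * \<tau>))"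
    by (auto simp: Y1_def Y2_def algebra_simps sum.distrib sum_subtractf)
  moreover have "sample_space N \<tau> n Phis t = PiM {..<n} D \<Otimes>\<^sub>M PiM J E"
    by (simp add: sample_space_def D_def E_def J_def)
  ultimately show ?thesis
    using variance_of_pair_sum[OF Y1(1-3) Y2(1-3)] Y1(4) Y2(4) by (simp add: J_def)
qed

lemma var_ALG_eq_inverse_acc:
  assumes init: "\<forall>b<n. smooth_density (Phis b)" and noise: "smooth_density N"
    and valid: "valid_pattern n M" and indep: "independent_pattern n M" and "a < n"
  shows "var_ALG N \<tau> n Phis M t a = ennreal (1 / acc (var_dens N) Phis M t a)"
proof -
  let ?vN = "var_dens N" and ?J = "{..<t} \<times> {..<n}"
  have "0 < ?vN" "\<forall>b<n. 0 < var_dens (Phis b)"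
    using init noise unfolding smooth_density_def by auto
  have linear: "(\<lambda>(x0, eta). opn ?vN Phis M x0 eta t a) = (\<lambda>(x0, eta).
      (\<Sum>i<n. init_coeff ?vN Phis M t a i * x0 i) + (\<Sum>j\<in>?J. noise_coeff ?vN Phis M t a j * eta j))"
    using opn_eq_linear_combination[OF valid \<open>a < n\<close>] by auto
  show ?thesis
    unfolding var_ALG_def linear variance_of_sample_space_linear[OF init noise]
    using coeff_sq_sum_eq_inverse_acc[OF valid indep \<open>\<forall>b<n. 0 < var_dens (Phis b)\<close>] \<open>0 < ?vN\<close> \<open>a < n\<close>
    by simp
qed

subsection \<open>Decay of the variances\<close>

lemma var_sup_le_inverse_linear:
  assumes densities: "\<forall>\<Phi>\<in>F. smooth_density \<Phi>" and "N \<in> F"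
    and "0 < c0" and c0_le: "\<forall>\<Phi>\<in>F. c0 \<le> 1 / var_dens \<Phi>"
  shows "var_sup F N \<tau> t \<le> ennreal (1 / (c0 + real t * chat (var_dens N) c0))"
  unfolding var_sup_def
proof (rule SUP_least, clarify)
  fix n Phis M a
  assume "1 \<le> n" and Phis: "\<forall>b<n. Phis b \<in> F" and valid: "valid_pattern n M"
    and "independent_pattern n M" "synchronous_depth n M t" "a < n"
  have "0 \<le> var_dens N" using assms(1,2) unfolding smooth_density_def by auto
  have "c0 + real t * chat (var_dens N) c0 \<le> acc (var_dens N) Phis M t a"
    using acc_ge_linear[OF valid \<open>synchronous_depth n M t\<close> \<open>0 \<le> var_dens N\<close> \<open>0 < c0\<close> _ \<open>a < n\<close>]
      Phis c0_le by simp
  moreover have "0 < c0 + real t * chat (var_dens N) c0"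
    using chat_pos[OF \<open>0 < c0\<close> \<open>0 \<le> var_dens N\<close>] \<open>0 < c0\<close> by (simp add: add_pos_nonneg)
  ultimately show "var_ALG N \<tau> n Phis M t a \<le> ennreal (1 / (c0 + real t * chat (var_dens N) c0))"
    using var_ALG_eq_inverse_acc[OF _ _ valid \<open>independent_pattern n M\<close> \<open>a < n\<close>] Phis densities \<open>N \<in> F\<close>
    by (simp add: ennreal_leI divide_left_mono)
qed

lemma tendsto_inverse_linear_0:
  assumes "0 < d"
  shows "(\<lambda>t. 1 / (c + real t * d)) \<longlonglongrightarrow> 0"
proof (rule tendsto_divide_0[OF tendsto_const])
  have "filterlim (\<lambda>t. d * real t) at_top sequentially"
    by (rule filterlim_tendsto_pos_mult_at_top[OF tendsto_const assms filterlim_real_sequentially])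
  then have "filterlim (\<lambda>t. c + d * real t) at_top sequentially"
    by (rule filterlim_tendsto_add_at_top[OF tendsto_const])
  then show "filterlim (\<lambda>t. c + real t * d) at_infinity sequentially"
    by (intro filterlim_at_top_imp_at_infinity) (simp add: mult.commute)
qed

theorem claim2:
  fixes F :: "(real \<Rightarrow> real) set" and N :: "real \<Rightarrow> real" and \<tau> :: real
  assumes "finite F"
    and "\<forall>\<Phi>\<in>F. smooth_density \<Phi>"
    and "N \<in> F"
  shows "(\<lambda>t. var_sup F N \<tau> t) \<longlonglongrightarrow> 0"
proof -
  define c0 where "c0 = Min ((\<lambda>\<Phi>. 1 / var_dens \<Phi>) ` F)"
  have "0 < c0"
    unfolding c0_def using assms by (subst Min_gr_iff) (auto simp: smooth_density_def)
  have c0_le: "\<forall>\<Phi>\<in>F. c0 \<le> 1 / var_dens \<Phi>"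
    unfolding c0_def using assms(1) by auto
  have "0 \<le> var_dens N" using assms(2,3) unfolding smooth_density_def by auto
  then have lim: "(\<lambda>t. ennreal (1 / (c0 + real t * chat (var_dens N) c0))) \<longlonglongrightarrow> 0"
    using tendsto_ennrealI[OF tendsto_inverse_linear_0[OF chat_pos[OF \<open>0 < c0\<close>]]] by simp
  show ?thesis
    by (rule tendsto_sandwich[OF _ _ tendsto_const lim])
      (simp_all add: var_sup_le_inverse_linear[OF assms(2,3) \<open>0 < c0\<close> c0_le])
qed

end
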